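(* Let $n,b$ be integers with $1<n<b$, and let $\Gamma_0$ be a strongly-connected edge-labelled subgraph of the $(n,b)$-Hoey-Sloane graph $\Gamma$. Then its reflection $\overline{\Gamma}_0$ is a strongly-connected edge-labelled subgraph of $\Gamma$.
   Context: Let $\lambda(x)$ denote the least non-negative residue of $x$ modulo $b$. The $(n,b)$-mother graph $M$ is the directed graph on vertex set $\{0,\ldots,b-1\}$ whose edges are the ordered pairs of digits $(d_1,d_2)$ with $\lambda(d_1+(b-n)d_2)\le n-1$. The $(n,b)$-Hoey-Sloane graph $\Gamma$ is the edge-labelled directed graph on states $\{0,\ldots,n-1\}$ in which $(c_1,c_2)$ is an edge precisely when $\{(d_1,d_2)\in E(M)\mid n d_2-d_1+c_1=b c_2\}$ is nonempty, this set being its label set. For a digit $d$ put $\overline d=b-1-d$, for a state $c$ put $\overline c=n-1-c$. The reflection $\overline{\Gamma}_0$ of an edge-labelled subgraph $\Gamma_0$ of $\Gamma$ has vertices $\overline{c}$ ($c$ a vertex of $\Gamma_0$), edges $(\overline{c}_1,\overline{c}_2)$ ($(c_1,c_2)$ an edge of $\Gamma_0$), and label $(\overline{d}_1,\overline{d}_2)$ on $(\overline{c}_1,\overline{c}_2)$ whenever $(d_1,d_2)$ labels $(c_1,c_2)$ in $\Gamma_0$. *)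

theory Defs
  imports Main
begin

definition mother_edge :: "int \<Rightarrow> int \<Rightarrow> int \<times> int \<Rightarrow> bool" where
  "mother_edge n b e = (case e of (d1, d2) \<Rightarrow>
     d1 \<in> {0..b-1} \<and> d2 \<in> {0..b-1} \<and> (d1 + (b - n) * d2) mod b \<le> n - 1)"

definition HS_label :: "int \<Rightarrow> int \<Rightarrow> int \<times> int \<Rightarrow> (int \<times> int) set" where
  "HS_label n b c = (case c of (c1, c2) \<Rightarrow>
     {(d1, d2). mother_edge n b (d1, d2) \<and> n * d2 - d1 + c1 = b * c2})"

definition HS_vertices :: "int \<Rightarrow> int set" where
  "HS_vertices n = {0..n-1}"

definition HS_edges :: "int \<Rightarrow> int \<Rightarrow> (int \<times> int) set" where
  "HS_edges n b = {(c1, c2). c1 \<in> HS_vertices n \<and> c2 \<in> HS_vertices n \<and> HS_label n b (c1, c2) \<noteq> {}}"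

type_synonym elgraph = "int set \<times> (int \<times> int) set \<times> (int \<times> int \<Rightarrow> (int \<times> int) set)"

definition is_el_subgraph :: "int \<Rightarrow> int \<Rightarrow> elgraph \<Rightarrow> bool" where
  "is_el_subgraph n b G = (case G of (V, E, L) \<Rightarrow>
     V \<subseteq> HS_vertices n \<and> E \<subseteq> HS_edges n b \<and> E \<subseteq> V \<times> V \<and>
     (\<forall>e\<in>E. L e \<noteq> {} \<and> L e \<subseteq> HS_label n b e))"

definition strongly_connected :: "elgraph \<Rightarrow> bool" where
  "strongly_connected G = (case G of (V, E, L) \<Rightarrow> \<forall>u\<in>V. \<forall>v\<in>V. (u, v) \<in> E\<^sup>*)"

definition bar_digit :: "int \<Rightarrow> int \<Rightarrow> int" where
  "bar_digit b d = b - 1 - d"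

definition bar_state :: "int \<Rightarrow> int \<Rightarrow> int" where
  "bar_state n c = n - 1 - c"

definition reflection :: "int \<Rightarrow> int \<Rightarrow> elgraph \<Rightarrow> elgraph" where
  "reflection n b G = (case G of (V, E, L) \<Rightarrow>
     (bar_state n ` V,
      (\<lambda>(c1, c2). (bar_state n c1, bar_state n c2)) ` E,
      (\<lambda>(c1', c2'). (\<lambda>(d1, d2). (bar_digit b d1, bar_digit b d2)) `
            L (bar_state n c1', bar_state n c2'))))"

end

theory Submission
  imports Defs
begin

(* The reflection d |-> b - 1 - d, c |-> n - 1 - c is an automorphism of the Hoey-Sloane
   graph. On digits it sends the residue r = (d1 + (b - n) d2) mod b to n - 1 - r, so it
   preserves the mother graph, and it turns the carry equation n d2 - d1 + c1 = b c2 into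
   the same equation for the reflected digits and states. Being induced by a bijection of
   the states, it also maps paths to paths and hence preserves strong connectivity. *)

lemma bar_state_bar_state [simp]: "bar_state n (bar_state n c) = c"
  by (simp add: bar_state_def)

lemma bar_state_in_HS_vertices: "c \<in> HS_vertices n \<Longrightarrow> bar_state n c \<in> HS_vertices n"
  by (auto simp: HS_vertices_def bar_state_def)

lemma mother_edge_bar_digit:
  assumes "n \<le> b" and "mother_edge n b (d1, d2)"
  shows "mother_edge n b (bar_digit b d1, bar_digit b d2)"
proof -
  define r where "r = (d1 + (b - n) * d2) mod b"
  have r: "0 \<le> r" "r \<le> n - 1"
    using assms unfolding r_def mother_edge_def by auto
  have "(bar_digit b d1 + (b - n) * bar_digit b d2) mod b
        = ((n - 1 - (d1 + (b - n) * d2)) + b * (b - n)) mod b"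
    unfolding bar_digit_def by (simp add: algebra_simps)
  also have "\<dots> = (n - 1 - r) mod b"
    unfolding r_def by (simp add: mod_diff_right_eq)
  also have "\<dots> = n - 1 - r"
    using r assms(1) by (intro mod_pos_pos_trivial) auto
  finally show ?thesis
    using assms r unfolding mother_edge_def bar_digit_def by auto
qed

lemma bar_digit_in_HS_label:
  assumes "n \<le> b" and "(d1, d2) \<in> HS_label n b (c1, c2)"
  shows "(bar_digit b d1, bar_digit b d2) \<in> HS_label n b (bar_state n c1, bar_state n c2)"
proof -
  have mother: "mother_edge n b (d1, d2)" and carry: "n * d2 - d1 + c1 = b * c2"
    using assms(2) unfolding HS_label_def by auto
  from carry have "n * bar_digit b d2 - bar_digit b d1 + bar_state n c1 = b * bar_state n c2"
    unfolding bar_digit_def bar_state_def by (simp add: algebra_simps)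
  with mother_edge_bar_digit[OF assms(1) mother] show ?thesis
    unfolding HS_label_def by auto
qed

lemma rtrancl_map_prod_image:
  assumes "(x, y) \<in> R\<^sup>*"
  shows "(f x, f y) \<in> (map_prod f f ` R)\<^sup>*"
  using assms
proof (induction rule: rtrancl_induct)
  case base
  show ?case by simp
next
  case (step y z)
  then have "(f y, f z) \<in> map_prod f f ` R" by force
  with step.IH show ?case by (rule rtrancl_into_rtrancl)
qed

lemma strongly_connected_reflection:
  assumes "strongly_connected G"
  shows "strongly_connected (reflection n b G)"
  using assms rtrancl_map_prod_image[where f = "bar_state n"]
  by (auto simp: strongly_connected_def reflection_def map_prod_def split: prod.splits)

lemma is_el_subgraph_reflection:
  assumes "n \<le> b" and "is_el_subgraph n b G"
  shows "is_el_subgraph n b (reflection n b G)"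
proof -
  obtain V E L where G: "G = (V, E, L)" by (cases G) auto
  have V: "V \<subseteq> HS_vertices n" and E: "E \<subseteq> HS_edges n b" and EV: "E \<subseteq> V \<times> V"
    and L: "\<And>e. e \<in> E \<Longrightarrow> L e \<noteq> {} \<and> L e \<subseteq> HS_label n b e"
    using assms(2) unfolding G is_el_subgraph_def by auto
  define bar_digits where "bar_digits = (\<lambda>(d1, d2). (bar_digit b d1, bar_digit b d2))"
  have label_reflected: "bar_digits ` L (c1, c2) \<noteq> {}
      \<and> bar_digits ` L (c1, c2) \<subseteq> HS_label n b (bar_state n c1, bar_state n c2)"
    if "(c1, c2) \<in> E" for c1 c2
    using L[OF that] bar_digit_in_HS_label[OF assms(1)] unfolding bar_digits_def by fastforce
  have edge_reflected: "(bar_state n c1, bar_state n c2) \<in> HS_edges n b"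
    if "(c1, c2) \<in> E" for c1 c2
    using that E label_reflected[OF that] bar_state_in_HS_vertices
    unfolding HS_edges_def by auto
  have "reflection n b G = (bar_state n ` V, (\<lambda>(c1, c2). (bar_state n c1, bar_state n c2)) ` E,
      \<lambda>(c1, c2). bar_digits ` L (bar_state n c1, bar_state n c2))"
    unfolding G reflection_def bar_digits_def by simp
  then show ?thesis
    using V EV label_reflected edge_reflected bar_state_in_HS_vertices
    unfolding is_el_subgraph_def by fastforce
qed

theorem corollary14:
  fixes n b :: int and G :: elgraph
  assumes "1 < n" and "n < b"
    and "is_el_subgraph n b G" and "strongly_connected G"
  shows "is_el_subgraph n b (reflection n b G) \<and> strongly_connected (reflection n b G)"
  using assms is_el_subgraph_reflection strongly_connected_reflection by simp

end
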